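(* Let $\hbar>0$ and, on the Schwartz space $\mathcal{S}(\mathbb{R}^3)$, let $\widehat{x}_j$ be multiplication by $x_j$ and $\widehat{p}_j=-i\hbar\,\partial_{x_j}$ for $j=1,2,3$ (so $[\widehat{x}_j,\widehat{p}_k]=i\hbar\,\delta_{jk}$ and all other pairs commute). Consider the classical angular momentum $l=(l_1,l_2,l_3)=(x_2p_3-x_3p_2,\;x_3p_1-x_1p_3,\;x_1p_2-x_2p_1)$ and the polynomial $l^2=l_1^2+l_2^2+l_3^2$ in $(x,p)\in\mathbb{R}^3\times\mathbb{R}^3$. Let $\widehat{l}=(\widehat{x}_2\widehat{p}_3-\widehat{x}_3\widehat{p}_2,\;\widehat{x}_3\widehat{p}_1-\widehat{x}_1\widehat{p}_3,\;\widehat{x}_1\widehat{p}_2-\widehat{x}_2\widehat{p}_1)$ and $\widehat{l}^{\,2}=\widehat{l}_1^{\,2}+\widehat{l}_2^{\,2}+\widehat{l}_3^{\,2}$. Then the Born--Jordan quantization of $l^2$ satisfies $$\mathrm{Op}_{\mathrm{BJ}}(l^2)=\widehat{l}^{\,2}+2\hbar^2 .$$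
   Context: Shubin $\tau$-ordering: for a real parameter $\tau$ and non-negative integers $m,n$, in one variable $\mathrm{Op}_\tau(x^m p^n)=\sum_{k=0}^{n}\binom{n}{k}\tau^{n-k}(1-\tau)^k\,\widehat{p}^{\,k}\widehat{x}^{\,m}\widehat{p}^{\,n-k}$. For a monomial in several variables $x^\alpha p^\beta=\prod_{j} x_j^{\alpha_j}p_j^{\beta_j}$, $\mathrm{Op}_\tau(x^\alpha p^\beta)=\prod_j \mathrm{Op}_\tau(x_j^{\alpha_j}p_j^{\beta_j})$ (the factors for different indices $j$ commute), extended linearly to polynomials. The Born--Jordan quantization is $\mathrm{Op}_{\mathrm{BJ}}(a)=\int_0^1 \mathrm{Op}_\tau(a)\,d\tau$ for polynomials $a(x,p)$; in one variable this gives $\mathrm{Op}_{\mathrm{BJ}}(x^m p^n)=\frac{1}{m+1}\sum_{k=0}^m \widehat{x}^{\,m-k}\widehat{p}^{\,n}\widehat{x}^{\,k}$. Here $l^2$ is regarded as the expanded polynomial, e.g. $l_3^2=x_1^2p_2^2+x_2^2p_1^2-2x_1p_1x_2p_2$. *)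

theory Defs
  imports "HOL-Analysis.Analysis" "HOL-Library.Poly_Mapping"
begin

datatype var = X "3" | P "3"

type_synonym monomial = "var \<Rightarrow>\<^sub>0 nat"
type_synonym phase_poly = "monomial \<Rightarrow>\<^sub>0 real"

definition xv :: "3 \<Rightarrow> phase_poly" where
  "xv j = Poly_Mapping.single (Poly_Mapping.single (X j) 1) 1"

definition pv :: "3 \<Rightarrow> phase_poly" where
  "pv j = Poly_Mapping.single (Poly_Mapping.single (P j) 1) 1"

definition l_cl :: "3 \<Rightarrow> phase_poly" where
  "l_cl k = (if k = 1 then xv 2 * pv 3 - xv 3 * pv 2
             else if k = 2 then xv 3 * pv 1 - xv 1 * pv 3
             else xv 1 * pv 2 - xv 2 * pv 1)"

definition l_sq :: phase_poly where
  "l_sq = l_cl 1 ^ 2 + l_cl 2 ^ 2 + l_cl 3 ^ 2"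

type_synonym fn = "real^3 \<Rightarrow> complex"

definition dpart :: "3 \<Rightarrow> fn \<Rightarrow> fn" where
  "dpart j f = (\<lambda>x. vector_derivative (\<lambda>t::real. f (x + t *\<^sub>R axis j 1)) (at 0))"

definition xhat :: "3 \<Rightarrow> fn \<Rightarrow> fn" where
  "xhat j f = (\<lambda>x. complex_of_real (x $ j) * f x)"

definition phat :: "real \<Rightarrow> 3 \<Rightarrow> fn \<Rightarrow> fn" where
  "phat hbar j f = (\<lambda>x. - (\<i> * complex_of_real hbar) * dpart j f x)"

definition dparts :: "3 list \<Rightarrow> fn \<Rightarrow> fn" where
  "dparts js f = foldr dpart js f"

definition schwartz :: "fn set" where
  "schwartz = {f. (\<forall>js j x. (\<lambda>t::real. dparts js f (x + t *\<^sub>R axis j 1)) differentiable (at 0))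
               \<and> (\<forall>js (\<alpha>::3 \<Rightarrow> nat). bounded (range (\<lambda>x. complex_of_real (\<Prod>i\<in>UNIV. (x $ i) ^ \<alpha> i) * dparts js f x)))}"

definition op_tau_1 :: "real \<Rightarrow> real \<Rightarrow> 3 \<Rightarrow> nat \<Rightarrow> nat \<Rightarrow> fn \<Rightarrow> fn" where
  "op_tau_1 hbar \<tau> j m n f = (\<lambda>x. \<Sum>k\<le>n. complex_of_real (real (n choose k) * \<tau> ^ (n - k) * (1 - \<tau>) ^ k) *
      ((phat hbar j ^^ k) ((xhat j ^^ m) ((phat hbar j ^^ (n - k)) f))) x)"

definition op_tau_mon :: "real \<Rightarrow> real \<Rightarrow> monomial \<Rightarrow> fn \<Rightarrow> fn" where
  "op_tau_mon hbar \<tau> \<mu> f =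
     op_tau_1 hbar \<tau> 1 (Poly_Mapping.lookup \<mu> (X 1)) (Poly_Mapping.lookup \<mu> (P 1))
      (op_tau_1 hbar \<tau> 2 (Poly_Mapping.lookup \<mu> (X 2)) (Poly_Mapping.lookup \<mu> (P 2))
        (op_tau_1 hbar \<tau> 3 (Poly_Mapping.lookup \<mu> (X 3)) (Poly_Mapping.lookup \<mu> (P 3)) f))"

definition op_tau :: "real \<Rightarrow> real \<Rightarrow> phase_poly \<Rightarrow> fn \<Rightarrow> fn" where
  "op_tau hbar \<tau> a f = (\<lambda>x. \<Sum>\<mu>\<in>Poly_Mapping.keys a. complex_of_real (Poly_Mapping.lookup a \<mu>) * op_tau_mon hbar \<tau> \<mu> f x)"

definition op_BJ :: "real \<Rightarrow> phase_poly \<Rightarrow> fn \<Rightarrow> fn" where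
  "op_BJ hbar a f = (\<lambda>x. integral {0..1} (\<lambda>\<tau>. op_tau hbar \<tau> a f x))"

definition lhat :: "real \<Rightarrow> 3 \<Rightarrow> fn \<Rightarrow> fn" where
  "lhat hbar k f = (if k = 1 then (\<lambda>x. xhat 2 (phat hbar 3 f) x - xhat 3 (phat hbar 2 f) x)
                    else if k = 2 then (\<lambda>x. xhat 3 (phat hbar 1 f) x - xhat 1 (phat hbar 3 f) x)
                    else (\<lambda>x. xhat 1 (phat hbar 2 f) x - xhat 2 (phat hbar 1 f) x))"

definition lhat_sq :: "real \<Rightarrow> fn \<Rightarrow> fn" where
  "lhat_sq hbar f = (\<lambda>x. lhat hbar 1 (lhat hbar 1 f) x + lhat hbar 2 (lhat hbar 2 f) x
                         + lhat hbar 3 (lhat hbar 3 f) x)"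

end

theory Submission
  imports Defs
begin

(* Write l^2 as the sum over the pairs (a, b) of (x_a p_b - x_b p_a)^2.  Under Op_tau the squares
   x_a^2 p_b^2 become products of commuting operators, so all tau-dependence sits in the mixed
   monomial x_a p_a x_b p_b, where Op_tau(x_a p_a) = tau x_a p_a + (1 - tau) p_a x_a
   = x_a p_a - i hbar (1 - tau).  Comparing with the square of lhat_ab = x_a p_b - x_b p_a gives
     Op_tau((x_a p_b - x_b p_a)^2)
       = lhat_ab^2 + (1 - 2 tau) hbar^2 (x_a d_a + x_b d_b) + 2 (1 - tau)^2 hbar^2;
   integrating over tau in [0, 1] kills the middle term and turns the last one into 2 hbar^2 / 3,
   and the three pairs add up to 2 hbar^2.  Identifying both sides needs d_a d_b f = d_b d_a f,
   which holds for Schwartz functions because their third partial derivatives are bounded: the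
   second difference quotient approximates either mixed derivative up to O(h). *)

lemma norm_diff_le_of_vector_derivative_bound:
  fixes g g' :: "real \<Rightarrow> 'a::real_normed_vector"
  assumes "0 \<le> h"
    and "\<And>t. (g has_vector_derivative g' t) (at t)"
    and "\<And>t. norm (g' t) \<le> B"
  shows "norm (g h - g 0) \<le> B * h"
proof -
  have "norm (g h - g 0) \<le> B * norm (h - 0)"
  proof (rule differentiable_bound[where S = UNIV and f' = "\<lambda>t d. d *\<^sub>R g' t"])
    show "(g has_derivative (\<lambda>d. d *\<^sub>R g' t)) (at t within UNIV)" for t
      using assms(2) unfolding has_vector_derivative_def by simp
    show "onorm (\<lambda>d. d *\<^sub>R g' t) \<le> B" for t
      using assms(3) onorm_scaleR_left[OF bounded_linear_ident, of "g' t"] onorm_id[where 'a=real]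
      by simp
  qed auto
  with assms(1) show ?thesis by simp
qed

lemma norm_taylor_remainder_1_le:
  fixes g g' g'' :: "real \<Rightarrow> 'a::real_normed_vector"
  assumes "0 \<le> h"
    and g: "\<And>t. (g has_vector_derivative g' t) (at t)"
    and g': "\<And>t. (g' has_vector_derivative g'' t) (at t)"
    and g'': "\<And>t. norm (g'' t) \<le> M"
  shows "norm (g h - g 0 - h *\<^sub>R g' 0) \<le> M * h ^ 2"
proof -
  have "0 \<le> M" using g''[of 0] norm_ge_zero order_trans by blast
  have "norm (g' t - g' 0) \<le> M * h" if "t \<in> {0..h}" for t
  proof -
    have "norm (g' t - g' 0) \<le> M * t"
      using that g' g'' by (intro norm_diff_le_of_vector_derivative_bound) auto
    also have "\<dots> \<le> M * h" using that \<open>0 \<le> M\<close> by (simp add: mult_left_mono)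
    finally show ?thesis .
  qed
  then have "norm (g h - g 0 - (h - 0) *\<^sub>R g' 0) \<le> norm (h - 0) * (M * h)"
    using assms(1) g
    by (intro vector_differentiable_bound_linearization[where S = "{0..h}"])
       (auto simp: closed_segment_eq_real_ivl has_vector_derivative_at_within)
  with assms(1) show ?thesis by (simp add: power2_eq_square mult_ac)
qed

lemma nonpos_if_le_linear:
  fixes c K :: real
  assumes "\<And>h. h > 0 \<Longrightarrow> c \<le> K * h"
  shows "c \<le> 0"
proof (rule tendsto_lowerbound)
  show "((\<lambda>h. K * h) \<longlongrightarrow> 0) (at_right 0)"
    by (intro tendsto_eq_intros) auto
  show "\<forall>\<^sub>F h in at_right 0. c \<le> K * h"
    by (rule eventually_at_rightI[where b = 1]) (auto intro: assms)
qed simp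

definition partially_differentiable :: "3 \<Rightarrow> fn \<Rightarrow> bool" where
  "partially_differentiable j g \<longleftrightarrow>
     (\<forall>y. (\<lambda>t::real. g (y + t *\<^sub>R axis j 1)) differentiable (at 0))"

lemma has_vector_derivative_dpart_line:
  assumes "partially_differentiable j g"
  shows "((\<lambda>s. g (y + s *\<^sub>R axis j 1)) has_vector_derivative dpart j g (y + t *\<^sub>R axis j 1))
    (at t)"
proof -
  let ?z = "y + t *\<^sub>R axis j 1"
  have "((\<lambda>u. g (?z + u *\<^sub>R axis j 1)) has_vector_derivative dpart j g ?z) (at 0)"
    using assms vector_derivative_works unfolding dpart_def partially_differentiable_def by blast
  then have "((\<lambda>u. g (?z + u *\<^sub>R axis j 1)) \<circ> (\<lambda>s. s - t) has_vector_derivative dpart j g ?z)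
      (at t)"
    by (intro vector_diff_chain_at[where f' = 1, simplified]) (auto intro!: derivative_eq_intros)
  moreover have
    "(\<lambda>u. g (?z + u *\<^sub>R axis j 1)) \<circ> (\<lambda>s. s - t) = (\<lambda>s. g (y + s *\<^sub>R axis j 1))"
    by (simp add: fun_eq_iff algebra_simps)
  ultimately show ?thesis by simp
qed

lemma dpart_eqI:
  "(\<And>y. ((\<lambda>t. g (y + t *\<^sub>R axis j 1)) has_vector_derivative D y) (at 0)) \<Longrightarrow> dpart j g = D"
  unfolding dpart_def by (rule ext) (rule vector_derivative_at)

lemma partially_differentiableI:
  "(\<And>y. ((\<lambda>t. g (y + t *\<^sub>R axis j 1)) has_vector_derivative D y) (at 0)) \<Longrightarrow>
    partially_differentiable j g"
  unfolding partially_differentiable_def by (auto intro: differentiableI_vector)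

lemma has_vector_derivative_line_coord:
  "((\<lambda>t. complex_of_real ((y + t *\<^sub>R axis j 1) $ k)) has_vector_derivative (if k = j then 1 else 0))
    (at 0)"
proof -
  have "((\<lambda>t. complex_of_real (y $ k + t * (if k = j then 1 else 0))) has_vector_derivative
      complex_of_real (if k = j then 1 else 0)) (at 0)"
    by (auto intro!: derivative_eq_intros)
  then show ?thesis by (simp add: axis_def if_distrib cong: if_cong)
qed

lemma has_vector_derivative_line_add:
  "partially_differentiable j g \<Longrightarrow> partially_differentiable j h \<Longrightarrow>
  ((\<lambda>t. g (y + t *\<^sub>R axis j 1) + h (y + t *\<^sub>R axis j 1)) has_vector_derivative
    dpart j g y + dpart j h y) (at 0)"
  using has_vector_derivative_dpart_line[of j _ y 0] by (auto intro!: has_vector_derivative_add)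

lemma has_vector_derivative_line_minus:
  "partially_differentiable j g \<Longrightarrow>
  ((\<lambda>t. - g (y + t *\<^sub>R axis j 1)) has_vector_derivative - dpart j g y) (at 0)"
  using has_vector_derivative_dpart_line[of j _ y 0] by (auto intro!: has_vector_derivative_minus)

lemma has_vector_derivative_line_diff:
  "partially_differentiable j g \<Longrightarrow> partially_differentiable j h \<Longrightarrow>
  ((\<lambda>t. g (y + t *\<^sub>R axis j 1) - h (y + t *\<^sub>R axis j 1)) has_vector_derivative
    dpart j g y - dpart j h y) (at 0)"
  using has_vector_derivative_dpart_line[of j _ y 0] by (auto intro!: has_vector_derivative_diff)

lemma has_vector_derivative_line_mult:
  "partially_differentiable j g \<Longrightarrow> partially_differentiable j h \<Longrightarrow>
  ((\<lambda>t. g (y + t *\<^sub>R axis j 1) * h (y + t *\<^sub>R axis j 1)) has_vector_derivative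
    dpart j g y * h y + g y * dpart j h y) (at 0)"
  using has_vector_derivative_mult[OF has_vector_derivative_dpart_line[of j g y 0]
      has_vector_derivative_dpart_line[of j h y 0]]
  by (simp add: add.commute)

lemma partially_differentiable_const [simp]: "partially_differentiable j (\<lambda>y. c)"
  by (rule partially_differentiableI[OF has_vector_derivative_const])
lemma partially_differentiable_coord [simp]: "partially_differentiable j (\<lambda>y. complex_of_real (y $ k))"
  by (rule partially_differentiableI[OF has_vector_derivative_line_coord])
lemma partially_differentiable_add [simp]:
  "partially_differentiable j g \<Longrightarrow> partially_differentiable j h \<Longrightarrow>
    partially_differentiable j (\<lambda>y. g y + h y)"
  by (rule partially_differentiableI[OF has_vector_derivative_line_add])
lemma partially_differentiable_minus [simp]:
  "partially_differentiable j g \<Longrightarrow> partially_differentiable j (\<lambda>y. - g y)"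
  by (rule partially_differentiableI[OF has_vector_derivative_line_minus])
lemma partially_differentiable_diff [simp]:
  "partially_differentiable j g \<Longrightarrow> partially_differentiable j h \<Longrightarrow>
    partially_differentiable j (\<lambda>y. g y - h y)"
  by (rule partially_differentiableI[OF has_vector_derivative_line_diff])
lemma partially_differentiable_mult [simp]:
  "partially_differentiable j g \<Longrightarrow> partially_differentiable j h \<Longrightarrow>
    partially_differentiable j (\<lambda>y. g y * h y)"
  by (rule partially_differentiableI[OF has_vector_derivative_line_mult])

lemma dpart_const [simp]: "dpart j (\<lambda>y. c) = (\<lambda>y. 0)"
  by (rule dpart_eqI[OF has_vector_derivative_const])
lemma dpart_coord [simp]: "dpart j (\<lambda>y. complex_of_real (y $ k)) = (\<lambda>y. if k = j then 1 else 0)"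
  by (rule dpart_eqI[OF has_vector_derivative_line_coord])
lemma dpart_add [simp]:
  "partially_differentiable j g \<Longrightarrow> partially_differentiable j h \<Longrightarrow>
    dpart j (\<lambda>y. g y + h y) = (\<lambda>y. dpart j g y + dpart j h y)"
  by (rule dpart_eqI[OF has_vector_derivative_line_add])
lemma dpart_minus [simp]:
  "partially_differentiable j g \<Longrightarrow> dpart j (\<lambda>y. - g y) = (\<lambda>y. - dpart j g y)"
  by (rule dpart_eqI[OF has_vector_derivative_line_minus])
lemma dpart_diff [simp]:
  "partially_differentiable j g \<Longrightarrow> partially_differentiable j h \<Longrightarrow>
    dpart j (\<lambda>y. g y - h y) = (\<lambda>y. dpart j g y - dpart j h y)"
  by (rule dpart_eqI[OF has_vector_derivative_line_diff])
lemma dpart_mult [simp]: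
  "partially_differentiable j g \<Longrightarrow> partially_differentiable j h \<Longrightarrow>
    dpart j (\<lambda>y. g y * h y) = (\<lambda>y. dpart j g y * h y + g y * dpart j h y)"
  by (rule dpart_eqI[OF has_vector_derivative_line_mult])

lemma schwartz_partially_differentiable:
  assumes "f \<in> schwartz"
  shows "partially_differentiable j f" "partially_differentiable j (dpart k f)"
    "partially_differentiable j (dpart k (dpart l f))"
proof -
  have "partially_differentiable j (dparts js f)" for js
    using assms unfolding schwartz_def partially_differentiable_def by blast
  from this[of "[]"] this[of "[k]"] this[of "[k, l]"] show
    "partially_differentiable j f" "partially_differentiable j (dpart k f)"
    "partially_differentiable j (dpart k (dpart l f))"
    by (simp_all add: dparts_def)
qed

lemma schwartz_dparts_bounded:
  assumes "f \<in> schwartz"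
  shows "bounded (range (dparts js f))"
proof -
  have "\<forall>\<alpha>. bounded (range (\<lambda>x. complex_of_real (\<Prod>i\<in>UNIV. (x $ i) ^ \<alpha> i) * dparts js f x))"
    using assms unfolding schwartz_def by blast
  from this[rule_format, of "\<lambda>_. 0"] show ?thesis by simp
qed

definition second_difference :: "3 \<Rightarrow> 3 \<Rightarrow> real \<Rightarrow> fn \<Rightarrow> real^3 \<Rightarrow> complex" where
  "second_difference a b h f x =
     f (x + h *\<^sub>R axis a 1 + h *\<^sub>R axis b 1) - f (x + h *\<^sub>R axis a 1)
       - f (x + h *\<^sub>R axis b 1) + f x"

lemma second_difference_commute: "second_difference a b h f x = second_difference b a h f x"
  by (simp add: second_difference_def add_ac)

lemma second_difference_approx:
  assumes f: "f \<in> schwartz" and "0 \<le> h"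
    and M1: "\<And>y. norm (dpart b (dpart a (dpart a f)) y) \<le> M1"
    and M2: "\<And>y. norm (dpart b (dpart b (dpart a f)) y) \<le> M2"
  shows "norm (second_difference a b h f x - complex_of_real (h\<^sup>2) * dpart b (dpart a f) x)
    \<le> (M1 + M2) * h ^ 3"
proof -
  note line = schwartz_partially_differentiable[OF f, THEN has_vector_derivative_dpart_line]
  \<comment> \<open>G h - G 0 is the second difference; Taylor along a turns it into h G'(0) = h (L h - L 0),
      and Taylor along b turns that into h^2 times the mixed derivative.\<close>
  define G where "G s = f (x + h *\<^sub>R axis b 1 + s *\<^sub>R axis a 1) - f (x + s *\<^sub>R axis a 1)" for s
  define G' where
    "G' s = dpart a f (x + h *\<^sub>R axis b 1 + s *\<^sub>R axis a 1) - dpart a f (x + s *\<^sub>R axis a 1)" for s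
  define G'' where "G'' s = dpart a (dpart a f) (x + h *\<^sub>R axis b 1 + s *\<^sub>R axis a 1)
      - dpart a (dpart a f) (x + s *\<^sub>R axis a 1)" for s
  define L where "L t = dpart a f (x + t *\<^sub>R axis b 1)" for t
  have "(G has_vector_derivative G' s) (at s)" "(G' has_vector_derivative G'' s) (at s)" for s
    unfolding G_def G'_def G''_def by (intro has_vector_derivative_diff line)+
  moreover have "norm (G'' s) \<le> M1 * h" for s
  proof -
    have "norm ((\<lambda>r. dpart a (dpart a f) (x + s *\<^sub>R axis a 1 + r *\<^sub>R axis b 1)) h
        - (\<lambda>r. dpart a (dpart a f) (x + s *\<^sub>R axis a 1 + r *\<^sub>R axis b 1)) 0) \<le> M1 * h"
      using \<open>0 \<le> h\<close> line M1 by (intro norm_diff_le_of_vector_derivative_bound)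
    then show ?thesis unfolding G''_def by (simp add: add_ac)
  qed
  ultimately have G: "norm (G h - G 0 - h *\<^sub>R G' 0) \<le> M1 * h * h\<^sup>2"
    by (intro norm_taylor_remainder_1_le[OF \<open>0 \<le> h\<close>])
  have L: "norm (L h - L 0 - h *\<^sub>R dpart b (dpart a f) x) \<le> M2 * h\<^sup>2"
    using norm_taylor_remainder_1_le[OF \<open>0 \<le> h\<close> line(2) line(3) M2] by (simp add: L_def)
  have "second_difference a b h f x - complex_of_real (h\<^sup>2) * dpart b (dpart a f) x
      = (G h - G 0 - h *\<^sub>R G' 0) + h *\<^sub>R (L h - L 0 - h *\<^sub>R dpart b (dpart a f) x)"
    by (simp add: G_def G'_def L_def second_difference_def scaleR_conv_of_real power2_eq_square
        algebra_simps)
  also have "norm \<dots> \<le> M1 * h * h\<^sup>2 + h * (M2 * h\<^sup>2)"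
    using G L \<open>0 \<le> h\<close> by (intro norm_triangle_le add_mono) (auto intro: mult_left_mono)
  also have "\<dots> = (M1 + M2) * h ^ 3" by (simp add: algebra_simps power3_eq_cube power2_eq_square)
  finally show ?thesis .
qed

lemma schwartz_dpart_commute:
  assumes f: "f \<in> schwartz"
  shows "dpart b (dpart a f) = dpart a (dpart b f)"
proof
  fix x
  have bound: "\<exists>M. \<forall>y. norm (dparts js f y) \<le> M" for js
    using schwartz_dparts_bounded[OF f] by (auto simp: bounded_iff)
  obtain M1 M2 M3 M4 where
    "\<And>y. norm (dpart b (dpart a (dpart a f)) y) \<le> M1"
    "\<And>y. norm (dpart b (dpart b (dpart a f)) y) \<le> M2"
    "\<And>y. norm (dpart a (dpart b (dpart b f)) y) \<le> M3"
    "\<And>y. norm (dpart a (dpart a (dpart b f)) y) \<le> M4"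
    using bound[of "[b, a, a]"] bound[of "[b, b, a]"] bound[of "[a, b, b]"] bound[of "[a, a, b]"]
    by (auto simp: dparts_def)
  from second_difference_approx[OF f _ this(1,2)] second_difference_approx[OF f _ this(3,4)]
  have approx:
    "norm (second_difference a b h f x - complex_of_real (h\<^sup>2) * dpart b (dpart a f) x) \<le> (M1 + M2) * h ^ 3"
    "norm (second_difference a b h f x - complex_of_real (h\<^sup>2) * dpart a (dpart b f) x) \<le> (M3 + M4) * h ^ 3"
    if "h > 0" for h
    using that second_difference_commute by auto
  let ?d = "norm (dpart b (dpart a f) x - dpart a (dpart b f) x)"
  have "?d \<le> (M1 + M2 + M3 + M4) * h" if "h > 0" for h
  proof -
    let ?D = "second_difference a b h f x"
    have "h\<^sup>2 * ?d
        = norm (complex_of_real (h\<^sup>2) * (dpart b (dpart a f) x - dpart a (dpart b f) x))"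
      by (simp add: norm_mult norm_power)
    also have "\<dots> = norm ((?D - complex_of_real (h\<^sup>2) * dpart a (dpart b f) x)
        - (?D - complex_of_real (h\<^sup>2) * dpart b (dpart a f) x))"
      by (simp add: algebra_simps)
    also have "\<dots> \<le> (M3 + M4) * h ^ 3 + (M1 + M2) * h ^ 3"
      using add_mono[OF approx(2,1)[OF that]] by (rule norm_triangle_le_diff)
    finally have "h\<^sup>2 * ?d \<le> h\<^sup>2 * ((M1 + M2 + M3 + M4) * h)"
      by (simp add: power2_eq_square power3_eq_cube algebra_simps)
    with that show ?thesis by simp
  qed
  then have "?d \<le> 0" by (rule nonpos_if_le_linear)
  then show "dpart b (dpart a f) x = dpart a (dpart b f) x" by simp
qed

definition ang_mom :: "3 \<Rightarrow> 3 \<Rightarrow> phase_poly" where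
  "ang_mom a b = xv a * pv b - xv b * pv a"

definition ang_mom_op :: "real \<Rightarrow> 3 \<Rightarrow> 3 \<Rightarrow> fn \<Rightarrow> fn" where
  "ang_mom_op hbar a b g = (\<lambda>x. xhat a (phat hbar b g) x - xhat b (phat hbar a g) x)"

lemma l_cl_eq_ang_mom: "l_cl 1 = ang_mom 2 3" "l_cl 2 = ang_mom 3 1" "l_cl 3 = ang_mom 1 2"
  by (simp_all add: l_cl_def ang_mom_def)

lemma lhat_eq_ang_mom_op:
  "lhat hbar 1 = ang_mom_op hbar 2 3" "lhat hbar 2 = ang_mom_op hbar 3 1"
  "lhat hbar 3 = ang_mom_op hbar 1 2"
  by (simp_all add: lhat_def ang_mom_op_def fun_eq_iff)

lemma ang_mom_sq:
  "ang_mom a b ^ 2 =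
     Poly_Mapping.single (Poly_Mapping.single (X a) 2 + Poly_Mapping.single (P b) 2) 1
   + Poly_Mapping.single (Poly_Mapping.single (X b) 2 + Poly_Mapping.single (P a) 2) 1
   + Poly_Mapping.single (Poly_Mapping.single (X a) 1 + Poly_Mapping.single (P a) 1
       + Poly_Mapping.single (X b) 1 + Poly_Mapping.single (P b) 1) (-2)"
  (is "_ = ?rhs")
proof -
  have xp:
    "xv c * pv d = Poly_Mapping.single (Poly_Mapping.single (X c) 1 + Poly_Mapping.single (P d) 1) 1"
    for c d by (simp add: xv_def pv_def mult_single)
  have double: "Poly_Mapping.single c 1 + Poly_Mapping.single d 1
      + (Poly_Mapping.single c 1 + Poly_Mapping.single d 1)
      = Poly_Mapping.single c 2 + Poly_Mapping.single d (2::nat)" for c d :: var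
    by (rule poly_mapping_eqI) (simp add: lookup_add lookup_single when_def)
  have "ang_mom a b ^ 2 = (xv a * pv b) * (xv a * pv b) + (xv b * pv a) * (xv b * pv a)
      - Poly_Mapping.single 0 2 * ((xv a * pv a) * (xv b * pv b))"
    unfolding ang_mom_def by (simp add: power2_eq_square algebra_simps)
  also have "\<dots> = ?rhs"
    unfolding xp mult_single double by (simp add: add_ac flip: single_uminus)
  finally show ?thesis .
qed

lemma op_tau_eq_sum_superset:
  assumes "finite S" "Poly_Mapping.keys a \<subseteq> S"
  shows "op_tau h t a f x
    = (\<Sum>\<mu>\<in>S. complex_of_real (Poly_Mapping.lookup a \<mu>) * op_tau_mon h t \<mu> f x)"
  unfolding op_tau_def
  by (rule sum.mono_neutral_left) (use assms in \<open>auto simp: in_keys_iff\<close>)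

lemma op_tau_add: "op_tau h t (a + b) f x = op_tau h t a f x + op_tau h t b f x"
proof -
  let ?S = "Poly_Mapping.keys a \<union> Poly_Mapping.keys b"
  have "op_tau h t (a + b) f x
      = (\<Sum>\<mu>\<in>?S. complex_of_real (Poly_Mapping.lookup (a + b) \<mu>) * op_tau_mon h t \<mu> f x)"
    by (rule op_tau_eq_sum_superset) (auto dest: keys_add[THEN subsetD])
  also have "\<dots> = op_tau h t a f x + op_tau h t b f x"
    by (simp add: op_tau_eq_sum_superset[where S = ?S] lookup_add distrib_right sum.distrib)
  finally show ?thesis .
qed

lemma op_tau_single:
  "op_tau h t (Poly_Mapping.single \<mu> c) f x = complex_of_real c * op_tau_mon h t \<mu> f x"
  by (simp add: op_tau_def)

lemma op_tau_1_position: "op_tau_1 h t j m 0 g = (xhat j ^^ m) g"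
  by (simp add: op_tau_1_def)

lemma op_tau_1_momentum: "op_tau_1 h t j 0 n g = (phat h j ^^ n) g"
proof -
  have "(phat h j ^^ k) ((phat h j ^^ (n - k)) g) = (phat h j ^^ n) g" if "k \<le> n" for k
    using that funpow_add[of k "n - k" "phat h j"] by simp
  then have "op_tau_1 h t j 0 n g
      = (\<lambda>x. complex_of_real (\<Sum>k\<le>n. real (n choose k) * (1 - t) ^ k * t ^ (n - k))
              * (phat h j ^^ n) g x)"
    by (simp add: op_tau_1_def sum_distrib_left sum_distrib_right mult_ac)
  also have "(\<Sum>k\<le>n. real (n choose k) * (1 - t) ^ k * t ^ (n - k)) = 1"
    using binomial_ring[of "1 - t" t n] by simp
  finally show ?thesis by simp
qed

lemma op_tau_1_1_1:
  "op_tau_1 h t j 1 1 g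
     = (\<lambda>x. complex_of_real t * xhat j (phat h j g) x
             + complex_of_real (1 - t) * phat h j (xhat j g) x)"
  by (simp add: op_tau_1_def)

(* op_tau_mon nests the factors in the order 1, 2, 3, which the order of type 3 does not
   reflect (there 3 = 0); so we only record that one of the two nestings occurs. *)
lemma op_tau_mon_two_indices:
  assumes "a \<noteq> b"
    and "\<And>j. j \<noteq> a \<Longrightarrow> j \<noteq> b \<Longrightarrow>
      Poly_Mapping.lookup \<mu> (X j) = 0 \<and> Poly_Mapping.lookup \<mu> (P j) = 0"
  shows "op_tau_mon h t \<mu> g = op_tau_1 h t a (Poly_Mapping.lookup \<mu> (X a)) (Poly_Mapping.lookup \<mu> (P a))
           (op_tau_1 h t b (Poly_Mapping.lookup \<mu> (X b)) (Poly_Mapping.lookup \<mu> (P b)) g)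
    \<or> op_tau_mon h t \<mu> g = op_tau_1 h t b (Poly_Mapping.lookup \<mu> (X b)) (Poly_Mapping.lookup \<mu> (P b))
           (op_tau_1 h t a (Poly_Mapping.lookup \<mu> (X a)) (Poly_Mapping.lookup \<mu> (P a)) g)"
  using assms exhaust_3[of a] exhaust_3[of b] by (auto simp: op_tau_mon_def op_tau_1_position)

lemma op_tau_mon_position_sq_momentum_sq:
  assumes f: "f \<in> schwartz" and "a \<noteq> b"
  shows "op_tau_mon h t (Poly_Mapping.single (X a) 2 + Poly_Mapping.single (P b) 2) f x
    = - complex_of_real (h\<^sup>2) * complex_of_real (x $ a) ^ 2 * dpart b (dpart b f) x"
proof -
  have "xhat a (xhat a (phat h b (phat h b f))) x
      = - complex_of_real (h\<^sup>2) * complex_of_real (x $ a) ^ 2 * dpart b (dpart b f) x"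
    "phat h b (phat h b (xhat a (xhat a f))) x
      = - complex_of_real (h\<^sup>2) * complex_of_real (x $ a) ^ 2 * dpart b (dpart b f) x"
    using schwartz_partially_differentiable[OF f] \<open>a \<noteq> b\<close>
    by (simp_all add: xhat_def phat_def power2_eq_square algebra_simps)
  with op_tau_mon_two_indices[OF \<open>a \<noteq> b\<close>,
      of "Poly_Mapping.single (X a) 2 + Poly_Mapping.single (P b) 2" h t f]
  show ?thesis
    using \<open>a \<noteq> b\<close>
    by (auto simp: lookup_add lookup_single op_tau_1_position op_tau_1_momentum numeral_2_eq_2)
qed

lemma op_tau_1_1_1_comp:
  assumes f: "f \<in> schwartz" and "a \<noteq> b"
  shows "op_tau_1 h t a 1 1 (op_tau_1 h t b 1 1 f) x = - complex_of_real (h\<^sup>2) *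
    (complex_of_real (x $ a) * complex_of_real (x $ b) * dpart a (dpart b f) x
     + complex_of_real (1 - t)
       * (complex_of_real (x $ a) * dpart a f x + complex_of_real (x $ b) * dpart b f x)
     + complex_of_real ((1 - t)\<^sup>2) * f x)"
  using schwartz_partially_differentiable[OF f] \<open>a \<noteq> b\<close> unfolding op_tau_1_1_1
  by (simp add: xhat_def phat_def power2_eq_square algebra_simps)

lemma op_tau_mon_position_momentum_pair:
  assumes f: "f \<in> schwartz" and "a \<noteq> b"
  shows "op_tau_mon h t (Poly_Mapping.single (X a) 1 + Poly_Mapping.single (P a) 1
      + Poly_Mapping.single (X b) 1 + Poly_Mapping.single (P b) 1) f x = - complex_of_real (h\<^sup>2) *
    (complex_of_real (x $ a) * complex_of_real (x $ b) * dpart a (dpart b f) x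
     + complex_of_real (1 - t)
       * (complex_of_real (x $ a) * dpart a f x + complex_of_real (x $ b) * dpart b f x)
     + complex_of_real ((1 - t)\<^sup>2) * f x)"
  using op_tau_mon_two_indices[OF \<open>a \<noteq> b\<close>, of "Poly_Mapping.single (X a) 1 + Poly_Mapping.single (P a) 1
      + Poly_Mapping.single (X b) 1 + Poly_Mapping.single (P b) 1" h t f]
    op_tau_1_1_1_comp[OF f \<open>a \<noteq> b\<close>] op_tau_1_1_1_comp[OF f \<open>a \<noteq> b\<close>[symmetric]]
    schwartz_dpart_commute[OF f, of a b] \<open>a \<noteq> b\<close>
  by (auto simp: lookup_add lookup_single algebra_simps)

lemma ang_mom_op_sq:
  assumes f: "f \<in> schwartz" and "a \<noteq> b"
  shows "ang_mom_op h a b (ang_mom_op h a b f) x = - complex_of_real (h\<^sup>2) *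
    (complex_of_real (x $ a) ^ 2 * dpart b (dpart b f) x
     + complex_of_real (x $ b) ^ 2 * dpart a (dpart a f) x
     - 2 * complex_of_real (x $ a) * complex_of_real (x $ b) * dpart a (dpart b f) x
     - complex_of_real (x $ a) * dpart a f x - complex_of_real (x $ b) * dpart b f x)"
  using schwartz_partially_differentiable[OF f] schwartz_dpart_commute[OF f, of a b] \<open>a \<noteq> b\<close>
  by (simp add: ang_mom_op_def xhat_def phat_def power2_eq_square algebra_simps)

lemma op_tau_ang_mom_sq:
  assumes f: "f \<in> schwartz" and "a \<noteq> b"
  shows "op_tau h t (ang_mom a b ^ 2) f x = ang_mom_op h a b (ang_mom_op h a b f) x
    + complex_of_real ((1 - 2 * t) * h\<^sup>2)
      * (complex_of_real (x $ a) * dpart a f x + complex_of_real (x $ b) * dpart b f x)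
    + complex_of_real (2 * (1 - t)\<^sup>2 * h\<^sup>2) * f x"
proof -
  have "b \<noteq> a" using \<open>a \<noteq> b\<close> by simp
  show ?thesis
    unfolding ang_mom_sq op_tau_add op_tau_single ang_mom_op_sq[OF f \<open>a \<noteq> b\<close>]
      op_tau_mon_position_sq_momentum_sq[OF f \<open>a \<noteq> b\<close>]
      op_tau_mon_position_sq_momentum_sq[OF f \<open>b \<noteq> a\<close>]
      op_tau_mon_position_momentum_pair[OF f \<open>a \<noteq> b\<close>]
    by (simp add: power2_eq_square algebra_simps)
qed

lemma has_integral_op_tau_ang_mom_sq:
  assumes f: "f \<in> schwartz" and "a \<noteq> b"
  shows "((\<lambda>t. op_tau h t (ang_mom a b ^ 2) f x) has_integral
    ang_mom_op h a b (ang_mom_op h a b f) x + complex_of_real (2 / 3 * h\<^sup>2) * f x) {0..1}"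
proof -
  let ?Q = "complex_of_real (x $ a) * dpart a f x + complex_of_real (x $ b) * dpart b f x"
  have "((\<lambda>t::real. 1 - 2 * t) has_integral (1 - 1\<^sup>2) - (0 - 0\<^sup>2)) {0..1}"
    by (intro fundamental_theorem_of_calculus)
       (auto intro!: derivative_eq_intros simp flip: has_real_derivative_iff_has_vector_derivative)
  from has_integral_scaleR_left[OF this, of "h\<^sup>2 *\<^sub>R ?Q"]
  have Q: "((\<lambda>t. (1 - 2 * t) *\<^sub>R h\<^sup>2 *\<^sub>R ?Q) has_integral 0) {0..1}"
    by simp
  have "((\<lambda>t::real. 2 * (1 - t)\<^sup>2) has_integral (- 2 / 3 * (1 - 1) ^ 3) - (- 2 / 3 * (1 - 0) ^ 3))
      {0..1}"
    by (intro fundamental_theorem_of_calculus)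
       (auto intro!: derivative_eq_intros simp: power2_eq_square
         simp flip: has_real_derivative_iff_has_vector_derivative)
  from has_integral_scaleR_left[OF this, of "h\<^sup>2 *\<^sub>R f x"]
  have F: "((\<lambda>t. (2 * (1 - t)\<^sup>2) *\<^sub>R h\<^sup>2 *\<^sub>R f x) has_integral (2 / 3) *\<^sub>R h\<^sup>2 *\<^sub>R f x)
      {0..1}"
    by simp
  let ?L = "ang_mom_op h a b (ang_mom_op h a b f) x"
  have C: "((\<lambda>t::real. ?L) has_integral ?L) {0..1}"
    using has_integral_const_real[of ?L 0 1] by simp
  show ?thesis
    using has_integral_add[OF has_integral_add[OF C Q] F]
    by (simp add: op_tau_ang_mom_sq[OF assms] scaleR_conv_of_real mult.assoc)
qed

theorem mainTheorem1:
  fixes hbar :: real and f :: "real^3 \<Rightarrow> complex"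
  assumes "hbar > 0" and "f \<in> schwartz"
  shows "op_BJ hbar l_sq f = (\<lambda>x. lhat_sq hbar f x + complex_of_real (2 * hbar ^ 2) * f x)"
proof
  fix x
  let ?L = "\<lambda>a b. ang_mom_op hbar a b (ang_mom_op hbar a b f) x"
  let ?c = "complex_of_real (2 / 3 * hbar\<^sup>2) * f x"
  note ang_mom_sq_integral =
    has_integral_op_tau_ang_mom_sq[OF \<open>f \<in> schwartz\<close>, where h = hbar and x = x]
  have l_sq: "l_sq = ang_mom 2 3 ^ 2 + ang_mom 3 1 ^ 2 + ang_mom 1 2 ^ 2"
    by (simp add: l_sq_def l_cl_eq_ang_mom)
  have "((\<lambda>\<tau>. op_tau hbar \<tau> l_sq f x) has_integral (?L 2 3 + ?c) + (?L 3 1 + ?c) + (?L 1 2 + ?c))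
      {0..1}"
    unfolding l_sq op_tau_add by (intro has_integral_add ang_mom_sq_integral) simp_all
  also have "(?L 2 3 + ?c) + (?L 3 1 + ?c) + (?L 1 2 + ?c)
      = lhat_sq hbar f x + complex_of_real (2 * hbar ^ 2) * f x"
    by (simp add: lhat_sq_def lhat_eq_ang_mom_op algebra_simps)
  finally show "op_BJ hbar l_sq f x = lhat_sq hbar f x + complex_of_real (2 * hbar ^ 2) * f x"
    unfolding op_BJ_def by (rule integral_unique)
qed

end
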